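(* Let $S$ be any set and $s,s':I_m\to S$. If $s$ and $s'$ are mirrored, then $(s,s')$ is a special pair.
   Context: $\mathscr{T}_m=\{\sigma\in\mathcal{S}_m \mid \exists t:\ \sigma(1)>\cdots>\sigma(t)=1,\ \sigma(t)<\cdots<\sigma(m)\}$, $\mathcal{S}_m$ acting on sequences $s:I_m\to S$ by $\sigma s=s\circ\sigma^{-1}$. $(\mathrm{rev}\,s)(i)=s(m+1-i)$. Two sequences $s,s'$ are mirrored if for every $\sigma\in\mathscr{T}_m$ there is $\sigma'\in\mathscr{T}_m$ with $\sigma s=\sigma's'$, and for every $\tau'\in\mathscr{T}_m$ there is $\tau\in\mathscr{T}_m$ with $\tau's'=\tau s$. An element $A\in\mathrm{Im}\,s$ is direct for $(s,s')$ if $s'(i)=A$ for all $i\in s^{-1}(A)$, and reverse for $(s,s')$ if $(\mathrm{rev}\,s')(i)=A$ for all $i\in s^{-1}(A)$. The pair $(s,s')$ is special if every $A\in\mathrm{Im}\,s$ is direct or reverse for $(s,s')$. *)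

theory Defs
  imports "HOL-Combinatorics.Permutations"
begin

text \<open>I_m = {1..m}. Sequences s : I_m -> S are modelled as functions nat => 'a,
 of which only the values on {1..m} are relevant; equality of sequences is
 equality on {1..m}.\<close>

definition Tperm :: "nat \<Rightarrow> (nat \<Rightarrow> nat) set" where
  "Tperm m = {\<sigma>. \<sigma> permutes {1..m} \<and>
     (\<exists>t\<in>{1..m}. (\<forall>i j. 1 \<le> i \<longrightarrow> i < j \<longrightarrow> j \<le> t \<longrightarrow> \<sigma> i > \<sigma> j)
                \<and> \<sigma> t = 1
                \<and> (\<forall>i j. t \<le> i \<longrightarrow> i < j \<longrightarrow> j \<le> m \<longrightarrow> \<sigma> i < \<sigma> j))}"

definition act :: "(nat \<Rightarrow> nat) \<Rightarrow> (nat \<Rightarrow> 'a) \<Rightarrow> (nat \<Rightarrow> 'a)" where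
  "act \<sigma> s = s \<circ> inv \<sigma>"

definition seq_eq :: "nat \<Rightarrow> (nat \<Rightarrow> 'a) \<Rightarrow> (nat \<Rightarrow> 'a) \<Rightarrow> bool" where
  "seq_eq m s s' \<longleftrightarrow> (\<forall>i\<in>{1..m}. s i = s' i)"

definition rev_seq :: "nat \<Rightarrow> (nat \<Rightarrow> 'a) \<Rightarrow> (nat \<Rightarrow> 'a)" where
  "rev_seq m s = (\<lambda>i. s (m + 1 - i))"

definition mirrored :: "nat \<Rightarrow> (nat \<Rightarrow> 'a) \<Rightarrow> (nat \<Rightarrow> 'a) \<Rightarrow> bool" where
  "mirrored m s s' \<longleftrightarrow>
     (\<forall>\<sigma>\<in>Tperm m. \<exists>\<sigma>'\<in>Tperm m. seq_eq m (act \<sigma> s) (act \<sigma>' s')) \<and>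
     (\<forall>\<tau>'\<in>Tperm m. \<exists>\<tau>\<in>Tperm m. seq_eq m (act \<tau>' s') (act \<tau> s))"

definition is_direct :: "nat \<Rightarrow> (nat \<Rightarrow> 'a) \<Rightarrow> (nat \<Rightarrow> 'a) \<Rightarrow> 'a \<Rightarrow> bool" where
  "is_direct m s s' A \<longleftrightarrow> (\<forall>i\<in>{1..m}. s i = A \<longrightarrow> s' i = A)"

definition is_reverse :: "nat \<Rightarrow> (nat \<Rightarrow> 'a) \<Rightarrow> (nat \<Rightarrow> 'a) \<Rightarrow> 'a \<Rightarrow> bool" where
  "is_reverse m s s' A \<longleftrightarrow> (\<forall>i\<in>{1..m}. s i = A \<longrightarrow> rev_seq m s' i = A)"

definition special_pair :: "nat \<Rightarrow> (nat \<Rightarrow> 'a) \<Rightarrow> (nat \<Rightarrow> 'a) \<Rightarrow> bool" where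
  "special_pair m s s' \<longleftrightarrow>
     (\<forall>A\<in>s ` {1..m}. is_direct m s s' A \<or> is_reverse m s s' A)"

end

theory Submission
  imports Defs
begin

text \<open>Read backwards, a T-permuted sequence lists the terms of s in an order in which they
  can be removed one at a time from either end of s, and every such removal order arises in
  this way. Mirrored sequences therefore have the same removal orders. The removal orders of a
  word determine it up to reversal: write v = a^p M a^q where a is the first letter and M
  neither starts nor ends with a. The removal orders of v determine p + q, min p q and the
  removal orders of M, so induction on the length settles everything except the swap
  (p, q) \<mapsto> (q, p) with p \<noteq> q, and comparing the removal orders that start with min p q
  copies of a shows that then M is a palindrome. Hence s' is s or its reverse.\<close>

section \<open>Orders of removal from both ends of a word\<close>

inductive pop_order :: "'a list \<Rightarrow> 'a list \<Rightarrow> bool" where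
  pop_Nil: "pop_order [] []"
| pop_hd: "pop_order xs z \<Longrightarrow> pop_order (x # xs) (x # z)"
| pop_last: "pop_order xs z \<Longrightarrow> pop_order (xs @ [x]) (x # z)"

lemma pop_order_length: "pop_order v z \<Longrightarrow> length z = length v"
  by (induction rule: pop_order.induct) auto

lemma pop_order_rev: "pop_order (rev v) = pop_order v"
proof -
  have *: "pop_order v z \<Longrightarrow> pop_order (rev v) z" for v z :: "'a list"
    by (induction rule: pop_order.induct) (auto intro: pop_order.intros)
  show ?thesis
    by (rule ext) (metis * rev_rev_ident)
qed

lemma pop_order_refl: "pop_order v v"
  by (induction v) (auto intro: pop_order.intros)

lemma pop_order_Nil_iff: "pop_order [] z \<longleftrightarrow> z = []"
  by (auto elim: pop_order.cases intro: pop_order.intros)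

lemma pop_order_to_Nil_iff: "pop_order v [] \<longleftrightarrow> v = []"
  by (auto elim: pop_order.cases intro: pop_order.intros)

lemma pop_order_Cons_iff:
  "pop_order v (e # z) \<longleftrightarrow>
     v \<noteq> [] \<and> (hd v = e \<and> pop_order (tl v) z \<or> last v = e \<and> pop_order (butlast v) z)"
proof
  assume "pop_order v (e # z)"
  then show "v \<noteq> [] \<and> (hd v = e \<and> pop_order (tl v) z \<or> last v = e \<and> pop_order (butlast v) z)"
    by (cases rule: pop_order.cases) auto
next
  assume "v \<noteq> [] \<and> (hd v = e \<and> pop_order (tl v) z \<or> last v = e \<and> pop_order (butlast v) z)"
  then show "pop_order v (e # z)"
    by (metis append_butlast_last_id list.collapse pop_hd pop_last)
qed

lemma pop_order_replicate_iff: "pop_order (replicate n a) z \<longleftrightarrow> z = replicate n a"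
proof (induction n arbitrary: z)
  case 0
  then show ?case by (simp add: pop_order_Nil_iff)
next
  case (Suc n)
  have "butlast (replicate (Suc n) a) = replicate n a"
    by (metis butlast_snoc replicate_Suc replicate_append_same)
  with Suc.IH show ?case
    by (cases z) (auto simp: pop_order_to_Nil_iff pop_order_Cons_iff)
qed

definition unpadded :: "'a \<Rightarrow> 'a list \<Rightarrow> bool" where
  "unpadded a M \<longleftrightarrow> M \<noteq> [] \<and> hd M \<noteq> a \<and> last M \<noteq> a"

lemma replicate_or_padded:
  "v = replicate (length v) a \<or> (\<exists>p q M. v = replicate p a @ M @ replicate q a \<and> unpadded a M)"
proof (induction v)
  case Nil
  then show ?case by simp
next
  case (Cons x v)
  show ?case
  proof (cases "x = a")
    case True
    with Cons.IH show ?thesis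
      by (metis append_Cons length_Cons replicate_Suc)
  next
    case False
    from Cons.IH consider "v = replicate (length v) a"
      | p q M where "v = replicate p a @ M @ replicate q a" "unpadded a M"
      by blast
    then show ?thesis
    proof cases
      case 1
      then have "x # v = replicate 0 a @ [x] @ replicate (length v) a" by simp
      with False show ?thesis unfolding unpadded_def by fastforce
    next
      case (2 p q M)
      then have "x # v = replicate 0 a @ (x # replicate p a @ M) @ replicate q a"
        "unpadded a (x # replicate p a @ M)"
        using False by (auto simp: unpadded_def)
      then show ?thesis by blast
    qed
  qed
qed

lemma pop_order_padded_Cons_iff:
  assumes "unpadded a M"
  shows "pop_order (replicate p a @ M @ replicate q a) (e # z) \<longleftrightarrow>
    (if e = a then 0 < p \<and> pop_order (replicate (p - 1) a @ M @ replicate q a) z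
                  \<or> 0 < q \<and> pop_order (replicate p a @ M @ replicate (q - 1) a) z
     else p = 0 \<and> e = hd M \<and> pop_order (tl M @ replicate q a) z
        \<or> q = 0 \<and> e = last M \<and> pop_order (replicate p a @ butlast M) z)"
proof -
  let ?v = "replicate p a @ M @ replicate q a"
  have M: "M \<noteq> []" "hd M \<noteq> a" "last M \<noteq> a"
    using assms unfolding unpadded_def by auto
  have hd: "hd ?v = (if p = 0 then hd M else a)" and
    tl: "tl ?v =
      (if p = 0 then tl M @ replicate q a else replicate (p - 1) a @ M @ replicate q a)"
    using M by (cases p; simp)+
  have last: "last ?v = (if q = 0 then last M else a)"
    using M by (cases q) auto
  have butlast: "butlast ?v =
      (if q = 0 then replicate p a @ butlast M else replicate p a @ M @ replicate (q - 1) a)"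
    using M by (cases q) (simp_all add: butlast_append flip: replicate_append_same)
  show ?thesis
    unfolding pop_order_Cons_iff hd tl last butlast using M by (simp split: if_splits) blast
qed

lemma pop_order_padded_replicate_prefix_iff:
  assumes "unpadded a M"
  shows "pop_order (replicate p a @ M @ replicate q a) (replicate j a @ z) \<longleftrightarrow>
    (\<exists>s t. s \<le> p \<and> t \<le> q \<and> s + t = j \<and>
      pop_order (replicate (p - s) a @ M @ replicate (q - t) a) z)"
proof (induction j arbitrary: p q)
  case 0
  show ?case by auto
next
  case (Suc j)
  let ?P = "\<lambda>p q. pop_order (replicate p a @ M @ replicate q a) z"
  have "pop_order (replicate p a @ M @ replicate q a) (replicate (Suc j) a @ z) \<longleftrightarrow>
      0 < p \<and> (\<exists>s t. s \<le> p - 1 \<and> t \<le> q \<and> s + t = j \<and> ?P (p - 1 - s) (q - t))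
    \<or> 0 < q \<and> (\<exists>s t. s \<le> p \<and> t \<le> q - 1 \<and> s + t = j \<and> ?P (p - s) (q - 1 - t))"
    using pop_order_padded_Cons_iff[OF assms] Suc.IH by simp
  also have "\<dots> \<longleftrightarrow> (\<exists>s t. s \<le> p \<and> t \<le> q \<and> s + t = Suc j \<and> ?P (p - s) (q - t))"
  proof
    assume "0 < p \<and> (\<exists>s t. s \<le> p - 1 \<and> t \<le> q \<and> s + t = j \<and> ?P (p - 1 - s) (q - t))
      \<or> 0 < q \<and> (\<exists>s t. s \<le> p \<and> t \<le> q - 1 \<and> s + t = j \<and> ?P (p - s) (q - 1 - t))"
    then show "\<exists>s t. s \<le> p \<and> t \<le> q \<and> s + t = Suc j \<and> ?P (p - s) (q - t)"
    proof (elim disjE conjE exE)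
      fix s t assume "0 < p" "s \<le> p - 1" "t \<le> q" "s + t = j" "?P (p - 1 - s) (q - t)"
      then show ?thesis by (intro exI[of _ "Suc s"] exI[of _ t]) auto
    next
      fix s t assume "0 < q" "s \<le> p" "t \<le> q - 1" "s + t = j" "?P (p - s) (q - 1 - t)"
      then show ?thesis by (intro exI[of _ s] exI[of _ "Suc t"]) auto
    qed
  next
    assume "\<exists>s t. s \<le> p \<and> t \<le> q \<and> s + t = Suc j \<and> ?P (p - s) (q - t)"
    then obtain s t where st: "s \<le> p" "t \<le> q" "s + t = Suc j" "?P (p - s) (q - t)"
      by blast
    show "0 < p \<and> (\<exists>s t. s \<le> p - 1 \<and> t \<le> q \<and> s + t = j \<and> ?P (p - 1 - s) (q - t))
      \<or> 0 < q \<and> (\<exists>s t. s \<le> p \<and> t \<le> q - 1 \<and> s + t = j \<and> ?P (p - s) (q - 1 - t))"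
    proof (cases s)
      case 0
      with st show ?thesis by (intro disjI2 conjI exI[of _ s] exI[of _ "t - 1"]) auto
    next
      case (Suc s')
      with st show ?thesis by (intro disjI1 conjI exI[of _ s'] exI[of _ t]) auto
    qed
  qed
  finally show ?case .
qed

lemma pop_order_padded_full_prefix_iff:
  assumes "unpadded a M"
  shows "pop_order (replicate p a @ M @ replicate q a) (replicate (p + q) a @ z) \<longleftrightarrow> pop_order M z"
  unfolding pop_order_padded_replicate_prefix_iff[OF assms]
proof
  assume "\<exists>s t. s \<le> p \<and> t \<le> q \<and> s + t = p + q \<and>
    pop_order (replicate (p - s) a @ M @ replicate (q - t) a) z"
  then obtain s t where "s \<le> p" "t \<le> q" "s + t = p + q"
    "pop_order (replicate (p - s) a @ M @ replicate (q - t) a) z" by blast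
  moreover from this have "s = p" "t = q" by arith+
  ultimately show "pop_order M z" by simp
qed (intro exI[of _ p] exI[of _ q]; simp)

lemma pop_order_padded_prefix_le:
  assumes "unpadded a M" "pop_order (replicate p a @ M @ replicate q a) (replicate j a @ z)"
  shows "j \<le> p + q"
  using assms(2) unfolding pop_order_padded_replicate_prefix_iff[OF assms(1)] by auto

lemma pop_order_padded_starts_other_iff:
  assumes "unpadded a M"
  shows "(\<exists>e z. e \<noteq> a \<and> pop_order (replicate p a @ M @ replicate q a) (e # z)) \<longleftrightarrow> p = 0 \<or> q = 0"
  using assms pop_order_refl unfolding pop_order_padded_Cons_iff[OF assms]
  by (auto simp: unpadded_def)

lemma pop_order_padded_other_after_iff:
  assumes "unpadded a M"
  shows "(\<exists>e z. e \<noteq> a \<and>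
      pop_order (replicate p a @ M @ replicate q a) (replicate j a @ e # z)) \<longleftrightarrow>
    min p q \<le> j \<and> j \<le> p + q"
proof -
  have "(\<exists>e z. e \<noteq> a \<and> pop_order (replicate p a @ M @ replicate q a) (replicate j a @ e # z)) \<longleftrightarrow>
      (\<exists>s t. s \<le> p \<and> t \<le> q \<and> s + t = j \<and> (p - s = 0 \<or> q - t = 0))"
    unfolding pop_order_padded_replicate_prefix_iff[OF assms]
      pop_order_padded_starts_other_iff[OF assms, symmetric] by blast
  also have "\<dots> \<longleftrightarrow> min p q \<le> j \<and> j \<le> p + q"
  proof
    assume "min p q \<le> j \<and> j \<le> p + q"
    then have "min p q \<le> j" "j \<le> p + q" by auto
    then show "\<exists>s t. s \<le> p \<and> t \<le> q \<and> s + t = j \<and> (p - s = 0 \<or> q - t = 0)"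
    proof (cases "p \<le> j")
      case True
      then show ?thesis using \<open>j \<le> p + q\<close> by (intro exI[of _ p] exI[of _ "j - p"]) auto
    next
      case False
      then show ?thesis using \<open>min p q \<le> j\<close> by (intro exI[of _ "j - q"] exI[of _ q]) auto
    qed
  qed auto
  finally show ?thesis .
qed

lemma pop_order_padded_eqD:
  assumes M: "unpadded a M" and M': "unpadded a M'"
    and eq: "pop_order (replicate p a @ M @ replicate q a) =
      pop_order (replicate p' a @ M' @ replicate q' a)"
  shows "p + q = p' + q'" "pop_order M = pop_order M'" "min p q = min p' q'"
proof -
  have "pop_order (replicate p' a @ M' @ replicate q' a) (replicate (p + q) a @ M)"
    unfolding eq[symmetric] pop_order_padded_full_prefix_iff[OF M] by (rule pop_order_refl)
  moreover have "pop_order (replicate p a @ M @ replicate q a) (replicate (p' + q') a @ M')"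
    unfolding eq pop_order_padded_full_prefix_iff[OF M'] by (rule pop_order_refl)
  ultimately show sum: "p + q = p' + q'"
    using pop_order_padded_prefix_le[OF M] pop_order_padded_prefix_le[OF M'] by (metis le_antisym)
  show "pop_order M = pop_order M'"
  proof
    fix z
    show "pop_order M z = pop_order M' z"
      using pop_order_padded_full_prefix_iff[OF M, of p q z] pop_order_padded_full_prefix_iff[OF M', of p' q' z]
      by (simp add: eq sum)
  qed
  have "min p q \<le> j \<and> j \<le> p + q \<longleftrightarrow> min p' q' \<le> j \<and> j \<le> p' + q'" for j
    using pop_order_padded_other_after_iff[OF M, of p q j] pop_order_padded_other_after_iff[OF M', of p' q' j]
    by (simp add: eq)
  from this[of "min p q"] this[of "min p' q'"] show "min p q = min p' q'" by linarith
qed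

lemma pop_order_padded_short_prefix_iff:
  assumes M: "unpadded a M" and "q < p" "e \<noteq> a"
  shows "pop_order (replicate p a @ M @ replicate q a) (replicate q a @ e # z) \<longleftrightarrow>
    e = last M \<and> pop_order (replicate p a @ butlast M) z"
  unfolding pop_order_padded_replicate_prefix_iff[OF M]
proof
  assume "\<exists>s t. s \<le> p \<and> t \<le> q \<and> s + t = q \<and>
    pop_order (replicate (p - s) a @ M @ replicate (q - t) a) (e # z)"
  then obtain s t where "s \<le> p" "t \<le> q" "s + t = q"
    and pop: "pop_order (replicate (p - s) a @ M @ replicate (q - t) a) (e # z)" by blast
  moreover from this have "p - s \<noteq> 0" using \<open>q < p\<close> by arith
  ultimately show "e = last M \<and> pop_order (replicate p a @ butlast M) z"
    using pop \<open>e \<noteq> a\<close> unfolding pop_order_padded_Cons_iff[OF M] by auto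
next
  assume "e = last M \<and> pop_order (replicate p a @ butlast M) z"
  then have "pop_order (replicate (p - 0) a @ M @ replicate (q - q) a) (e # z)"
    using \<open>e \<noteq> a\<close> pop_order_padded_Cons_iff[OF M, where q = 0] by simp
  then show "\<exists>s t. s \<le> p \<and> t \<le> q \<and> s + t = q \<and>
    pop_order (replicate (p - s) a @ M @ replicate (q - t) a) (e # z)" by fastforce
qed

lemma palindrome_if_append_Cons_replicate_commute:
  assumes "xs @ b # replicate p a = replicate p a @ b # xs" "b \<noteq> a"
  shows "rev xs = xs"
  using assms(1)
proof (induction xs rule: length_induct)
  case (1 xs)
  show ?case
  proof (cases "length xs < p")
    case True
    have "(xs @ b # replicate p a) ! length xs = b" "(replicate p a @ b # xs) ! length xs = a"
      using True by (simp_all add: nth_append)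
    with "1.prems" \<open>b \<noteq> a\<close> show ?thesis by simp
  next
    case False
    then have "take p xs = replicate p a"
      using arg_cong[OF "1.prems", of "take p"] by simp
    then obtain ys where xs: "xs = replicate p a @ ys"
      by (metis append_take_drop_id)
    with "1.prems" have ys: "ys @ b # replicate p a = b # replicate p a @ ys" by simp
    show ?thesis
    proof (cases ys)
      case Nil
      with xs show ?thesis by simp
    next
      case (Cons c zs)
      with ys have "c = b" "zs @ b # replicate p a = replicate p a @ b # zs" by simp_all
      moreover from this have "rev zs = zs"
        using "1.IH" xs Cons by simp
      ultimately show ?thesis using xs Cons by simp
    qed
  qed
qed

lemma palindrome_if_tl_append_replicate_eq:
  assumes "unpadded a M" "hd M = last M" "tl M @ replicate p a = replicate p a @ butlast M"
  shows "rev M = M"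
proof (cases "tl M")
  case Nil
  with assms(1) show ?thesis
    by (metis list.collapse rev_singleton_conv unpadded_def)
next
  case (Cons c cs)
  define b where "b = hd M"
  define xs where "xs = butlast (tl M)"
  have M: "M = b # xs @ [b]"
    using assms(1,2) Cons unfolding b_def xs_def unpadded_def
    by (metis append_butlast_last_id last_tl list.collapse list.distinct(1))
  with assms(3) have "xs @ b # replicate p a = replicate p a @ b # xs"
    by (simp add: butlast_append)
  then have "rev xs = xs"
    using assms(1) M by (intro palindrome_if_append_Cons_replicate_commute) (auto simp: unpadded_def)
  with M show ?thesis by simp
qed

lemma unpadded_rev: "unpadded a (rev M) \<longleftrightarrow> unpadded a M"
  by (auto simp: unpadded_def hd_rev last_rev)

lemma pop_order_swapped_padding_imp_palindrome:
  fixes a :: 'a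
  assumes IH: "\<And>v w :: 'a list. length v < p + length M + q \<Longrightarrow> pop_order v = pop_order w \<Longrightarrow>
      w = v \<or> w = rev v"
    and M: "unpadded a M" and "q < p"
    and eq: "pop_order (replicate p a @ M @ replicate q a) =
      pop_order (replicate q a @ M @ replicate p a)"
  shows "rev M = M"
proof -
  txt \<open>Reversing the second word gives a^p (rev M) a^q. Since q < p, on both sides a removal
    order starting with q copies of a continues with the last letter of the core.\<close>
  define N where "N = rev M"
  have N: "unpadded a N" using M unfolding N_def unpadded_rev .
  have rev_N: "replicate q a @ M @ replicate p a = rev (replicate p a @ N @ replicate q a)"
    by (simp add: N_def)
  have eq_N: "pop_order (replicate p a @ M @ replicate q a) = pop_order (replicate p a @ N @ replicate q a)"
    unfolding eq rev_N pop_order_rev ..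
  have last_M: "last M \<noteq> a" using M by (simp add: unpadded_def)
  have "pop_order (replicate p a @ M @ replicate q a) (replicate q a @ last M # replicate p a @ butlast M)"
    using pop_order_padded_short_prefix_iff[OF M \<open>q < p\<close> last_M] pop_order_refl by blast
  then have last_eq: "last M = last N"
    using pop_order_padded_short_prefix_iff[OF N \<open>q < p\<close> last_M] unfolding eq_N by blast
  have "pop_order (replicate p a @ butlast M) = pop_order (replicate p a @ butlast N)"
  proof
    fix z
    show "pop_order (replicate p a @ butlast M) z = pop_order (replicate p a @ butlast N) z"
      using pop_order_padded_short_prefix_iff[OF M \<open>q < p\<close> last_M, of z]
        pop_order_padded_short_prefix_iff[OF N \<open>q < p\<close> last_M, of z]
      unfolding eq_N last_eq by blast
  qed
  moreover have "length (replicate p a @ butlast M) < p + length M + q"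
    using M by (cases M) (auto simp: unpadded_def)
  ultimately have "replicate p a @ butlast N = replicate p a @ butlast M
      \<or> replicate p a @ butlast N = rev (replicate p a @ butlast M)"
    by (rule IH[rotated])
  then show ?thesis
  proof
    assume "replicate p a @ butlast N = replicate p a @ butlast M"
    then have "butlast N = butlast M" by simp
    moreover have "M \<noteq> []" "N \<noteq> []" using M N by (simp_all add: unpadded_def)
    ultimately have "N = M"
      using last_eq append_butlast_last_id by metis
    then show ?thesis by (simp add: N_def)
  next
    assume "replicate p a @ butlast N = rev (replicate p a @ butlast M)"
    then have "replicate p a @ rev (tl M) = rev (butlast M) @ replicate p a"
      unfolding N_def butlast_rev rev_append rev_replicate .
    then have "rev (replicate p a @ rev (tl M)) = rev (rev (butlast M) @ replicate p a)"
      by (rule arg_cong)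
    then have "tl M @ replicate p a = replicate p a @ butlast M" by simp
    moreover have "hd M = last M"
      using last_eq by (simp add: N_def last_rev)
    ultimately show ?thesis
      by (rule palindrome_if_tl_append_replicate_eq[OF M, rotated])
  qed
qed

lemma pop_order_padded_eq_imp_eq_or_rev:
  fixes a :: 'a
  assumes IH: "\<And>v w :: 'a list. length v < p + length M + q \<Longrightarrow> pop_order v = pop_order w \<Longrightarrow>
      w = v \<or> w = rev v"
    and M: "unpadded a M"
    and eq: "pop_order (replicate p a @ M @ replicate q a) =
      pop_order (replicate p' a @ M @ replicate q' a)"
  shows "replicate p' a @ M @ replicate q' a = replicate p a @ M @ replicate q a
    \<or> replicate p' a @ M @ replicate q' a = rev (replicate p a @ M @ replicate q a)"
proof -
  have "p' = p \<and> q' = q \<or> p' = q \<and> q' = p"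
    using pop_order_padded_eqD(1,3)[OF M M eq] by linarith
  then show ?thesis
  proof
    assume "p' = q \<and> q' = p"
    then have eq': "pop_order (replicate p a @ M @ replicate q a) = pop_order (replicate q a @ M @ replicate p a)"
      and w: "replicate p' a @ M @ replicate q' a = replicate q a @ M @ replicate p a"
      using eq by simp_all
    consider "p = q" | "q < p" | "p < q" by linarith
    then show ?thesis
    proof cases
      case 1
      with w show ?thesis by simp
    next
      case 2
      with w show ?thesis
        using pop_order_swapped_padding_imp_palindrome[OF IH M 2 eq'] by simp
    next
      case 3
      have "rev M = M"
        by (rule pop_order_swapped_padding_imp_palindrome[OF _ M 3 eq'[symmetric]])
          (use IH in \<open>simp add: add.commute\<close>)
      with w show ?thesis by simp
    qed
  qed simp
qed

theorem pop_order_eq_imp_eq_or_rev: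
  fixes v w :: "'a list"
  assumes "pop_order v = pop_order w"
  shows "w = v \<or> w = rev v"
  using assms
proof (induction "length v" arbitrary: v w rule: less_induct)
  case less
  have w_of_v: "pop_order v w" and v_of_w: "pop_order w v"
    using less.prems pop_order_refl by metis+
  show ?case
  proof (cases v)
    case Nil
    with w_of_v show ?thesis by (simp add: pop_order_Nil_iff)
  next
    case (Cons a _)
    from replicate_or_padded[of v a] show ?thesis
    proof
      assume "v = replicate (length v) a"
      with w_of_v show ?thesis by (metis pop_order_replicate_iff)
    next
      assume "\<exists>p q M. v = replicate p a @ M @ replicate q a \<and> unpadded a M"
      then obtain p q M where v: "v = replicate p a @ M @ replicate q a" and M: "unpadded a M"
        by blast
      have "0 < p"
        using M Cons v by (cases p; cases M) (auto simp: unpadded_def)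
      have "w \<noteq> replicate (length w) a"
      proof
        assume "w = replicate (length w) a"
        with v_of_w have "v = replicate (length w) a" by (metis pop_order_replicate_iff)
        moreover have "hd M \<in> set v" using M v by (cases M) (auto simp: unpadded_def)
        ultimately show False using M by (simp add: unpadded_def)
      qed
      then obtain p' q' M' where w: "w = replicate p' a @ M' @ replicate q' a" and M': "unpadded a M'"
        using replicate_or_padded[of w a] by blast
      have IH: "length v' < p + length M + q \<Longrightarrow> pop_order v' = pop_order w' \<Longrightarrow>
          w' = v' \<or> w' = rev v'"
        for v' w' :: "'a list"
        using less.hyps v by simp
      have "pop_order M = pop_order M'"
        using pop_order_padded_eqD(2)[OF M M'] less.prems v w by simp
      then have "M' = M \<or> M' = rev M"
        using IH \<open>0 < p\<close> by simp
      then show ?thesis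
      proof
        assume "M' = M"
        with less.prems show ?thesis
          using pop_order_padded_eq_imp_eq_or_rev[OF IH M] v w by simp
      next
        assume "M' = rev M"
        then have "rev w = replicate q' a @ M @ replicate p' a"
          using w by simp
        moreover have "pop_order v = pop_order (rev w)"
          using less.prems by (simp add: pop_order_rev)
        ultimately have "rev w = v \<or> rev w = rev v"
          using pop_order_padded_eq_imp_eq_or_rev[OF IH M] v by simp
        then show ?thesis by auto
      qed
    qed
  qed
qed

section \<open>T-permutations and removal orders\<close>

definition seq_list :: "nat \<Rightarrow> (nat \<Rightarrow> 'a) \<Rightarrow> 'a list" where
  "seq_list m s = map s [1..<Suc m]"

lemma length_seq_list [simp]: "length (seq_list m s) = m"
  by (simp add: seq_list_def)

lemma nth_seq_list: "k < m \<Longrightarrow> seq_list m s ! k = s (Suc k)"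
  unfolding seq_list_def by (simp add: nth_upt del: upt_Suc)

lemma seq_list_Suc: "seq_list (Suc m) s = seq_list m s @ [s (Suc m)]"
  by (simp add: seq_list_def)

lemma seq_list_Suc_Cons: "seq_list (Suc m) s = s 1 # seq_list m (\<lambda>i. s (Suc i))"
  unfolding seq_list_def by (simp add: upt_conv_Cons map_Suc_upt[symmetric] del: upt_Suc)

lemma seq_list_eq_iff: "seq_list m s = seq_list m s' \<longleftrightarrow> seq_eq m s s'"
  unfolding seq_list_def seq_eq_def by (auto simp: Ball_def)

lemma rev_seq_list: "rev (seq_list m s) = seq_list m (rev_seq m s)"
  by (rule nth_equalityI) (auto simp: rev_nth nth_seq_list rev_seq_def Suc_diff_Suc)

lemma TpermE:
  assumes "\<sigma> \<in> Tperm m"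
  obtains t where "\<sigma> permutes {1..m}" "t \<in> {1..m}" "\<sigma> t = 1"
    "\<And>i j. 1 \<le> i \<Longrightarrow> i < j \<Longrightarrow> j \<le> t \<Longrightarrow> \<sigma> j < \<sigma> i"
    "\<And>i j. t \<le> i \<Longrightarrow> i < j \<Longrightarrow> j \<le> m \<Longrightarrow> \<sigma> i < \<sigma> j"
  using assms unfolding Tperm_def by blast

lemma TpermI:
  assumes "\<sigma> permutes {1..m}" "t \<in> {1..m}" "\<sigma> t = 1"
    "\<And>i j. 1 \<le> i \<Longrightarrow> i < j \<Longrightarrow> j \<le> t \<Longrightarrow> \<sigma> j < \<sigma> i"
    "\<And>i j. t \<le> i \<Longrightarrow> i < j \<Longrightarrow> j \<le> m \<Longrightarrow> \<sigma> i < \<sigma> j"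
  shows "\<sigma> \<in> Tperm m"
  unfolding Tperm_def using assms by blast

lemma Tperm_permutes: "\<sigma> \<in> Tperm m \<Longrightarrow> \<sigma> permutes {1..m}"
  by (erule TpermE)

lemma Tperm_max_at_end:
  assumes "\<sigma> \<in> Tperm m"
  shows "\<sigma> 1 = m \<or> \<sigma> m = m"
proof -
  obtain t where P: "\<sigma> permutes {1..m}" and t: "t \<in> {1..m}"
    and dec: "\<And>i j. 1 \<le> i \<Longrightarrow> i < j \<Longrightarrow> j \<le> t \<Longrightarrow> \<sigma> j < \<sigma> i"
    and inc: "\<And>i j. t \<le> i \<Longrightarrow> i < j \<Longrightarrow> j \<le> m \<Longrightarrow> \<sigma> i < \<sigma> j"
    by (rule TpermE[OF assms]) blast
  have range: "\<sigma> i \<le> m" if "i \<in> {1..m}" for i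
    using permutes_in_image[OF P] that by auto
  have "m \<in> \<sigma> ` {1..m}"
    using permutes_image[OF P] t by auto
  then obtain i where i: "i \<in> {1..m}" "\<sigma> i = m" by blast
  show ?thesis
  proof (rule ccontr)
    assume "\<not> ?thesis"
    with i have "1 < i" "i < m" by (auto simp: le_less)
    show False
    proof (cases "i \<le> t")
      case True
      with dec[of 1 i] range[of 1] \<open>1 < i\<close> i show False by auto
    next
      case False
      with inc[of i m] range[of m] \<open>i < m\<close> i show False by auto
    qed
  qed
qed

lemma Tperm_restrict:
  assumes T: "\<sigma> \<in> Tperm (Suc m)" and fix_max: "\<sigma> (Suc m) = Suc m" and "0 < m"
  shows "\<sigma> \<in> Tperm m"
proof -
  obtain t where P: "\<sigma> permutes {1..Suc m}" and t: "t \<in> {1..Suc m}" and t1: "\<sigma> t = 1"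
    and dec: "\<And>i j. 1 \<le> i \<Longrightarrow> i < j \<Longrightarrow> j \<le> t \<Longrightarrow> \<sigma> j < \<sigma> i"
    and inc: "\<And>i j. t \<le> i \<Longrightarrow> i < j \<Longrightarrow> j \<le> Suc m \<Longrightarrow> \<sigma> i < \<sigma> j"
    by (rule TpermE[OF T]) blast
  have "\<sigma> permutes {1..m}"
    by (rule permutes_superset[OF P]) (use fix_max in \<open>auto simp: le_Suc_eq\<close>)
  moreover have "t \<in> {1..m}"
    using t t1 fix_max \<open>0 < m\<close> by (auto simp: le_Suc_eq)
  ultimately show ?thesis
    using t1 dec inc by (intro TpermI) auto
qed

lemma Tperm_extend:
  assumes "\<sigma> \<in> Tperm m"
  shows "\<sigma> \<in> Tperm (Suc m)"
proof -
  obtain t where P: "\<sigma> permutes {1..m}" and t: "t \<in> {1..m}" and t1: "\<sigma> t = 1"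
    and dec: "\<And>i j. 1 \<le> i \<Longrightarrow> i < j \<Longrightarrow> j \<le> t \<Longrightarrow> \<sigma> j < \<sigma> i"
    and inc: "\<And>i j. t \<le> i \<Longrightarrow> i < j \<Longrightarrow> j \<le> m \<Longrightarrow> \<sigma> i < \<sigma> j"
    by (rule TpermE[OF assms]) blast
  have P': "\<sigma> permutes {1..Suc m}" by (rule permutes_subset[OF P]) auto
  show ?thesis
  proof (rule TpermI[OF P' _ t1 dec])
    fix i j assume ij: "t \<le> i" "i < j" "j \<le> Suc m"
    show "\<sigma> i < \<sigma> j"
    proof (cases "j \<le> m")
      case True
      with inc ij show ?thesis by blast
    next
      case False
      then have "j = Suc m" using ij by simp
      moreover have "\<sigma> i \<in> {1..m}" using permutes_in_image[OF P] ij t by auto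
      ultimately show ?thesis using permutes_not_in[OF P] by simp
    qed
  qed (use t in auto)
qed

lemma seq_list_act_fixed_last:
  assumes "\<sigma> permutes {1..Suc m}" "\<sigma> (Suc m) = Suc m"
  shows "seq_list (Suc m) (act \<sigma> s) = seq_list m (act \<sigma> s) @ [s (Suc m)]"
proof -
  have "inv \<sigma> (Suc m) = Suc m" using permutes_inv_eq[OF assms(1)] assms(2) by blast
  then show ?thesis unfolding seq_list_Suc act_def by simp
qed

definition perm_tail :: "nat \<Rightarrow> (nat \<Rightarrow> nat) \<Rightarrow> nat \<Rightarrow> nat" where
  "perm_tail m \<sigma> = (\<lambda>i. if 1 \<le> i \<and> i \<le> m then \<sigma> (Suc i) else i)"

definition perm_cons :: "nat \<Rightarrow> (nat \<Rightarrow> nat) \<Rightarrow> nat \<Rightarrow> nat" where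
  "perm_cons m \<sigma> = (\<lambda>i. if i = 1 then Suc m else if 2 \<le> i \<and> i \<le> Suc m then \<sigma> (i - 1) else i)"

lemma Tperm_perm_tail:
  assumes T: "\<sigma> \<in> Tperm (Suc m)" and max_first: "\<sigma> 1 = Suc m" and "0 < m"
  shows "perm_tail m \<sigma> \<in> Tperm m"
proof -
  obtain t where P: "\<sigma> permutes {1..Suc m}" and t: "t \<in> {1..Suc m}" and t1: "\<sigma> t = 1"
    and dec: "\<And>i j. 1 \<le> i \<Longrightarrow> i < j \<Longrightarrow> j \<le> t \<Longrightarrow> \<sigma> j < \<sigma> i"
    and inc: "\<And>i j. t \<le> i \<Longrightarrow> i < j \<Longrightarrow> j \<le> Suc m \<Longrightarrow> \<sigma> i < \<sigma> j"
    by (rule TpermE[OF T]) blast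
  let ?\<tau> = "perm_tail m \<sigma>"
  have inj: "inj_on ?\<tau> {1..m}"
    using permutes_inj[OF P] by (auto simp: perm_tail_def inj_on_def dest: injD)
  have "?\<tau> ` {1..m} \<subseteq> {1..m}"
  proof
    fix y assume "y \<in> ?\<tau> ` {1..m}"
    then obtain x where x: "x \<in> {1..m}" "y = \<sigma> (Suc x)" unfolding perm_tail_def by auto
    have "y \<in> {1..Suc m}" using permutes_in_image[OF P, of "Suc x"] x by auto
    moreover have "y \<noteq> Suc m"
    proof
      assume "y = Suc m"
      then have "\<sigma> (Suc x) = \<sigma> 1" using x max_first by simp
      then have "Suc x = 1" by (rule injD[OF permutes_inj[OF P]])
      then show False using x by simp
    qed
    ultimately show "y \<in> {1..m}" by auto
  qed
  with inj have "?\<tau> ` {1..m} = {1..m}" by (intro endo_inj_surj) auto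
  with inj have P': "?\<tau> permutes {1..m}"
    by (intro bij_imp_permutes) (auto simp: bij_betw_def perm_tail_def)
  have "t \<noteq> 1" using t1 max_first \<open>0 < m\<close> by auto
  then have t': "t - 1 \<in> {1..m}" using t by auto
  show ?thesis
  proof (rule TpermI[OF P' t'])
    show "?\<tau> (t - 1) = 1" unfolding perm_tail_def using t' t1 \<open>t \<noteq> 1\<close> by auto
  next
    fix i j assume "1 \<le> i" "i < j" "j \<le> t - 1"
    then show "?\<tau> j < ?\<tau> i" unfolding perm_tail_def using dec[of "Suc i" "Suc j"] t by auto
  next
    fix i j assume "t - 1 \<le> i" "i < j" "j \<le> m"
    then show "?\<tau> i < ?\<tau> j" unfolding perm_tail_def using inc[of "Suc i" "Suc j"] t' by auto
  qed
qed

lemma seq_list_act_max_first: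
  assumes T: "\<sigma> \<in> Tperm (Suc m)" and max_first: "\<sigma> 1 = Suc m" and "0 < m"
  shows "seq_list (Suc m) (act \<sigma> s) = seq_list m (act (perm_tail m \<sigma>) (\<lambda>i. s (Suc i))) @ [s 1]"
proof -
  have P: "\<sigma> permutes {1..Suc m}" using T by (rule Tperm_permutes)
  have P': "perm_tail m \<sigma> permutes {1..m}"
    using Tperm_perm_tail[OF assms] by (rule Tperm_permutes)
  have "act \<sigma> s k = act (perm_tail m \<sigma>) (\<lambda>i. s (Suc i)) k" if k: "k \<in> {1..m}" for k
  proof -
    define x where "x = inv (perm_tail m \<sigma>) k"
    have "x \<in> {1..m}" "perm_tail m \<sigma> x = k"
      using k permutes_in_image[OF permutes_inv[OF P']] permutes_inverses(1)[OF P']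
      by (auto simp: x_def)
    then have "\<sigma> (Suc x) = k" unfolding perm_tail_def by auto
    then have "inv \<sigma> k = Suc x" using permutes_inv_eq[OF P] by blast
    then show ?thesis unfolding act_def x_def by simp
  qed
  moreover have "inv \<sigma> (Suc m) = 1"
    using permutes_inv_eq[OF P] max_first by blast
  then have "act \<sigma> s (Suc m) = s 1" by (simp add: act_def)
  ultimately show ?thesis
    unfolding seq_list_Suc by (simp add: seq_list_eq_iff seq_eq_def)
qed

lemma Tperm_perm_cons:
  assumes T: "\<sigma> \<in> Tperm m"
  shows "perm_cons m \<sigma> \<in> Tperm (Suc m)" "perm_cons m \<sigma> 1 = Suc m" "perm_tail m (perm_cons m \<sigma>) = \<sigma>"
proof -
  obtain t where P: "\<sigma> permutes {1..m}" and t: "t \<in> {1..m}" and t1: "\<sigma> t = 1"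
    and dec: "\<And>i j. 1 \<le> i \<Longrightarrow> i < j \<Longrightarrow> j \<le> t \<Longrightarrow> \<sigma> j < \<sigma> i"
    and inc: "\<And>i j. t \<le> i \<Longrightarrow> i < j \<Longrightarrow> j \<le> m \<Longrightarrow> \<sigma> i < \<sigma> j"
    by (rule TpermE[OF T]) blast
  let ?\<pi> = "perm_cons m \<sigma>"
  have range: "\<sigma> i \<in> {1..m}" if "i \<in> {1..m}" for i
    using permutes_in_image[OF P] that by blast
  show "?\<pi> 1 = Suc m" unfolding perm_cons_def by simp
  show "perm_tail m ?\<pi> = \<sigma>"
    using permutes_not_in[OF P] by (auto simp: perm_tail_def perm_cons_def)
  have range_cons: "?\<pi> i \<in> {1..m}" if "i \<in> {1..Suc m}" "i \<noteq> 1" for i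
  proof -
    have "i - 1 \<in> {1..m}" using that by auto
    then show ?thesis using range that by (simp add: perm_cons_def)
  qed
  have inj: "inj_on ?\<pi> {1..Suc m}"
  proof (rule inj_onI)
    fix x y assume x: "x \<in> {1..Suc m}" and y: "y \<in> {1..Suc m}" and eq: "?\<pi> x = ?\<pi> y"
    have "x \<noteq> 1 \<Longrightarrow> y \<noteq> 1 \<Longrightarrow> x - 1 = y - 1"
      using eq x y permutes_inj[OF P] by (auto simp: perm_cons_def dest: injD)
    then show "x = y"
      using eq x y range_cons \<open>?\<pi> 1 = Suc m\<close> by (cases "x = 1"; cases "y = 1") force+
  qed
  have "?\<pi> ` {1..Suc m} \<subseteq> {1..Suc m}"
    using range_cons \<open>?\<pi> 1 = Suc m\<close> by fastforce
  with inj have "?\<pi> ` {1..Suc m} = {1..Suc m}" by (intro endo_inj_surj) auto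
  with inj have P': "?\<pi> permutes {1..Suc m}"
    by (intro bij_imp_permutes) (auto simp: bij_betw_def perm_cons_def)
  have t': "Suc t \<in> {1..Suc m}" using t by auto
  show "?\<pi> \<in> Tperm (Suc m)"
  proof (rule TpermI[OF P' t'])
    show "?\<pi> (Suc t) = 1" using t t1 unfolding perm_cons_def by auto
  next
    fix i j assume ij: "1 \<le> i" "i < j" "j \<le> Suc t"
    show "?\<pi> j < ?\<pi> i"
    proof (cases "i = 1")
      case True
      have "?\<pi> j \<in> {1..m}" using range_cons[of j] ij t by auto
      with True \<open>?\<pi> 1 = Suc m\<close> show ?thesis by auto
    next
      case False
      then show ?thesis using dec[of "i - 1" "j - 1"] ij t unfolding perm_cons_def by auto
    qed
  next
    fix i j assume "Suc t \<le> i" "i < j" "j \<le> Suc m"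
    then show "?\<pi> i < ?\<pi> j" using inc[of "i - 1" "j - 1"] t unfolding perm_cons_def by auto
  qed
qed

lemma pop_order_seq_list_act:
  assumes "\<sigma> \<in> Tperm m"
  shows "pop_order (seq_list m s) (rev (seq_list m (act \<sigma> s)))"
  using assms
proof (induction m arbitrary: \<sigma> s)
  case 0
  then show ?case by (simp add: Tperm_def)
next
  case (Suc m)
  have P: "\<sigma> permutes {1..Suc m}" using Suc.prems by (rule Tperm_permutes)
  consider "m = 0" | "0 < m" "\<sigma> 1 = Suc m" | "0 < m" "\<sigma> (Suc m) = Suc m"
    using Tperm_max_at_end[OF Suc.prems] by blast
  then show ?case
  proof cases
    case 1
    then have "\<sigma> 1 = 1" using permutes_in_image[OF P, of 1] by simp
    then have "inv \<sigma> 1 = 1" using permutes_inv_eq[OF P] by blast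
    with 1 show ?thesis by (simp add: seq_list_def act_def pop_order_refl)
  next
    case 2
    have "rev (seq_list (Suc m) (act \<sigma> s)) = s 1 # rev (seq_list m (act (perm_tail m \<sigma>) (\<lambda>i. s (Suc i))))"
      by (simp add: seq_list_act_max_first[OF Suc.prems 2(2,1)])
    with Suc.IH[OF Tperm_perm_tail[OF Suc.prems 2(2,1)]] show ?thesis
      by (simp add: seq_list_Suc_Cons pop_hd)
  next
    case 3
    have "rev (seq_list (Suc m) (act \<sigma> s)) = s (Suc m) # rev (seq_list m (act \<sigma> s))"
      by (simp add: seq_list_act_fixed_last[OF P 3(2)])
    with Suc.IH[OF Tperm_restrict[OF Suc.prems 3(2,1)]] show ?thesis
      by (simp add: seq_list_Suc pop_last)
  qed
qed

lemma pop_order_seq_list_imp_Tperm: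
  assumes "pop_order (seq_list m s) z" "0 < m"
  shows "\<exists>\<sigma>\<in>Tperm m. z = rev (seq_list m (act \<sigma> s))"
  using assms
proof (induction m arbitrary: s z)
  case 0
  then show ?case by simp
next
  case (Suc m)
  show ?case
  proof (cases "m = 0")
    case True
    have "id \<in> Tperm 1" by (rule TpermI[of _ _ 1]) auto
    moreover have "z = [s 1]"
      using Suc.prems True pop_order_replicate_iff[of 1 "s 1" z] by (simp add: seq_list_def)
    ultimately show ?thesis
      using True by (intro bexI[of _ id]) (simp_all add: seq_list_def act_def)
  next
    case False
    obtain e z' where z: "z = e # z'"
      using pop_order_length[OF Suc.prems(1)] by (cases z) auto
    have "s 1 = e \<and> pop_order (seq_list m (\<lambda>i. s (Suc i))) z' \<or> s (Suc m) = e \<and> pop_order (seq_list m s) z'"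
      using Suc.prems(1) unfolding z pop_order_Cons_iff
      by (metis seq_list_Suc_Cons seq_list_Suc butlast_snoc last_snoc list.sel(1,3))
    then show ?thesis
    proof
      assume "s 1 = e \<and> pop_order (seq_list m (\<lambda>i. s (Suc i))) z'"
      moreover from this obtain \<tau> where "\<tau> \<in> Tperm m" "z' = rev (seq_list m (act \<tau> (\<lambda>i. s (Suc i))))"
        using Suc.IH False by blast
      ultimately show ?thesis
        using Tperm_perm_cons[of \<tau> m] seq_list_act_max_first[of "perm_cons m \<tau>" m s] False z
        by (intro bexI[of _ "perm_cons m \<tau>"]) auto
    next
      assume "s (Suc m) = e \<and> pop_order (seq_list m s) z'"
      moreover from this obtain \<tau> where \<tau>: "\<tau> \<in> Tperm m" "z' = rev (seq_list m (act \<tau> s))"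
        using Suc.IH False by blast
      moreover have "\<tau> permutes {1..Suc m}" "\<tau> (Suc m) = Suc m"
        using Tperm_permutes[OF Tperm_extend[OF \<tau>(1)]] permutes_not_in[OF Tperm_permutes[OF \<tau>(1)]]
        by auto
      then have "seq_list (Suc m) (act \<tau> s) = seq_list m (act \<tau> s) @ [s (Suc m)]"
        by (rule seq_list_act_fixed_last)
      ultimately show ?thesis
        using Tperm_extend[OF \<tau>(1)] z by (intro bexI[of _ \<tau>]) auto
    qed
  qed
qed

lemma mirrored_imp_pop_order_eq:
  assumes "mirrored m s s'"
  shows "pop_order (seq_list m s) = pop_order (seq_list m s')"
proof (cases "m = 0")
  case True
  then show ?thesis by (simp add: seq_list_def)
next
  case False
  have *: "pop_order (seq_list m t') z"
    if pop: "pop_order (seq_list m t) z"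
      and mir: "\<forall>\<sigma>\<in>Tperm m. \<exists>\<sigma>'\<in>Tperm m. seq_eq m (act \<sigma> t) (act \<sigma>' t')"
    for t t' :: "nat \<Rightarrow> 'a" and z
  proof -
    obtain \<sigma> where "\<sigma> \<in> Tperm m" "z = rev (seq_list m (act \<sigma> t))"
      using pop_order_seq_list_imp_Tperm[OF pop] False by blast
    moreover from this obtain \<sigma>' where "\<sigma>' \<in> Tperm m" "seq_eq m (act \<sigma> t) (act \<sigma>' t')"
      using mir by blast
    ultimately show ?thesis
      using pop_order_seq_list_act[of \<sigma>' m t'] by (simp add: seq_list_eq_iff[symmetric])
  qed
  from assms show ?thesis
    unfolding mirrored_def by (intro ext iffI) (auto intro: * simp: seq_eq_def)
qed

theorem mainTheorem18:
  fixes m :: nat and s s' :: "nat \<Rightarrow> 'a"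
  assumes "mirrored m s s'"
  shows "special_pair m s s'"
proof -
  have "pop_order (seq_list m s) = pop_order (seq_list m s')"
    using assms by (rule mirrored_imp_pop_order_eq)
  then have "seq_list m s' = seq_list m s \<or> seq_list m s' = rev (seq_list m s)"
    by (rule pop_order_eq_imp_eq_or_rev)
  then have "seq_eq m s s' \<or> seq_eq m s (rev_seq m s')"
    by (metis rev_rev_ident rev_seq_list seq_list_eq_iff)
  then show ?thesis
    unfolding special_pair_def is_direct_def is_reverse_def seq_eq_def by auto
qed

end
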